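(* Let $\tau_n\in\Gamma_n$ be a fixed rooted planar tree, let $\ell_n$ be a uniformly random admissible labeling of $\tau_n$, and let $(S^{\tau_n}_m)_{m=0}^n$ be the conditioned walk defined below. Then $$\big(S^{\tau_n}_m\big)_{m=0}^n\overset{d}{=}\big(\ell_n(c_m)\big)_{m=0}^n .$$
   Context: A rooted planar tree is a finite rooted plane (ordered) tree; $\Gamma_n$ is the set of rooted planar trees with $n$ edges. Vertices at even distance from the root (including the root) are white, those at odd distance are black; $V^\bullet(\tau)$ denotes the black vertices. For a black vertex $u$ of degree $k$ (number of neighbours), let $u_0$ be its parent and $u_1,\dots,u_{k-1}$ its children in clockwise order, $u_k=u_0$. An admissible labeling is a map $\ell$ from the white vertices to $\mathbb Z$ with $\ell(\text{root})=0$ and $\ell(u_{j+1})\ge \ell(u_j)-1$ for every black $u$ and $0\le j\le k-1$. White contour sequence: the clockwise contour walk around $\tau_n$ from the root has $2n$ steps alternately visiting white and black vertices; $c_m$ is the white vertex visited at step $2m$, $m=0,\dots,n$. For black $v$, $B_v\subseteq\{1,\dots,n\}$ is the set of $i$ such that the contour walk passes through $v$ between its visits to $c_{i-1}$ and $c_i$. Let $\xi_i$ be i.i.d. with $\mathbb P(\xi_1=i)=2^{-i-2}$, $i\ge-1$; $S_m=\sum_{i\le m}\xi_i$, $S_B=\sum_{i\in B}\xi_i$; $(S^{\tau_n}_m)_{m=0}^n$ has the law of $(S_m)_{m=0}^n$ conditioned on $\{S_{B_v}=0\ \forall v\in V^\bullet(\tau_n)\}$. *)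

theory Defs
  imports "HOL-Probability.Probability"
begin

text \<open>A rooted plane tree: a node with an ordered list of subtrees (in clockwise order).
  Vertices are addressed by positions (Ulam-Harris words): the root is the empty list,
  and the i-th child (0-based, clockwise order) of the vertex p is p @ [i].\<close>

datatype ptree = Node "ptree list"

fun subtree :: "ptree \<Rightarrow> nat list \<Rightarrow> ptree option" where
  "subtree t [] = Some t"
| "subtree (Node ts) (i # p) = (if i < length ts then subtree (ts ! i) p else None)"

definition vertices :: "ptree \<Rightarrow> nat list set" where
  "vertices t = {p. subtree t p \<noteq> None}"

fun kids :: "ptree \<Rightarrow> ptree list" where
  "kids (Node ts) = ts"

definition nchildren :: "ptree \<Rightarrow> nat list \<Rightarrow> nat" where
  "nchildren t p = (case subtree t p of Some s \<Rightarrow> length (kids s) | None \<Rightarrow> 0)"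

text \<open>number of edges = number of vertices - 1;  \<Gamma>_n = {t. edges t = n}\<close>
definition edges :: "ptree \<Rightarrow> nat" where
  "edges t = card (vertices t) - 1"

definition white :: "ptree \<Rightarrow> nat list set" where
  "white t = {p \<in> vertices t. even (length p)}"

definition black :: "ptree \<Rightarrow> nat list set" where
  "black t = {p \<in> vertices t. odd (length p)}"

text \<open>For a black vertex u of degree k = nchildren + 1:  u_0 = parent,
  u_j = j-th child (j = 1..k-1, clockwise order), u_k = u_0.\<close>
definition bdeg :: "ptree \<Rightarrow> nat list \<Rightarrow> nat" where
  "bdeg t u = nchildren t u + 1"

definition nbr :: "ptree \<Rightarrow> nat list \<Rightarrow> nat \<Rightarrow> nat list" where
  "nbr t u j = (if j = 0 \<or> j = bdeg t u then butlast u else u @ [j - 1])"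

text \<open>A labeling is a map from the white vertices to the integers;
  it is represented extensionally as a function on all positions which is 0 off the white
  vertices (so that the set of admissible labelings is a set of distinct objects in
  bijection with the labelings on white vertices).\<close>
definition admissible :: "ptree \<Rightarrow> (nat list \<Rightarrow> int) set" where
  "admissible t = {l. l [] = 0 \<and> (\<forall>p. p \<notin> white t \<longrightarrow> l p = 0) \<and>
      (\<forall>u \<in> black t. \<forall>j < bdeg t u. l (nbr t u (Suc j)) \<ge> l (nbr t u j) - 1)}"

text \<open>Clockwise contour walk from the root: the list of the 2n+1 vertices visited at
  steps 0, 1, ..., 2n.\<close>
fun contour :: "ptree \<Rightarrow> nat list list"
and contour_list :: "nat \<Rightarrow> ptree list \<Rightarrow> nat list list" where
  "contour (Node ts) = [] # contour_list 0 ts"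
| "contour_list i [] = []"
| "contour_list i (s # ss) = map (Cons i) (contour s) @ [[]] @ contour_list (Suc i) ss"

definition wc :: "ptree \<Rightarrow> nat \<Rightarrow> nat list" where
  "wc t m = contour t ! (2 * m)"

definition Bset :: "ptree \<Rightarrow> nat list \<Rightarrow> nat set" where
  "Bset t v = {i \<in> {1..edges t}. contour t ! (2 * i - 1) = v}"

definition xi_pmf :: "int pmf" where
  "xi_pmf = embed_pmf (\<lambda>i. if i \<ge> -1 then (1/2) powr (real_of_int (i + 2)) else 0)"

definition increments :: "nat \<Rightarrow> (nat \<Rightarrow> int) pmf" where
  "increments n = Pi_pmf {1..n} 0 (\<lambda>_. xi_pmf)"

definition walk_path :: "nat \<Rightarrow> (nat \<Rightarrow> int) \<Rightarrow> int list" where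
  "walk_path n x = map (\<lambda>m. \<Sum>i\<in>{1..m}. x i) [0..<n+1]"

definition cond_event :: "ptree \<Rightarrow> (nat \<Rightarrow> int) set" where
  "cond_event t = {x. \<forall>v \<in> black t. (\<Sum>i\<in>Bset t v. x i) = 0}"

definition cond_walk :: "ptree \<Rightarrow> int list pmf" where
  "cond_walk t = map_pmf (walk_path (edges t)) (cond_pmf (increments (edges t)) (cond_event t))"

definition label_seq :: "ptree \<Rightarrow> int list pmf" where
  "label_seq t = map_pmf (\<lambda>l. map (\<lambda>m. l (wc t m)) [0..<edges t + 1]) (pmf_of_set (admissible t))"

end

theory Submission
  imports Defs
begin

text \<open>
  Write \<open>n\<close> for the number of edges of \<open>\<tau>\<close> and \<open>c_0, \<dots>, c_n\<close> for its white
  contour sequence.  The map sending a labeling \<open>\<ell>\<close> to its increments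
  \<open>x_i = \<ell>(c_i) - \<ell>(c_{i-1})\<close> is a bijection from the admissible labelings onto the set of
  sequences \<open>x\<close> supported on \<open>{1..n}\<close> with \<open>x_i \<ge> -1\<close> and \<open>x(B_v) = 0\<close> for every black \<open>v\<close>.
  Every such sequence sums to zero, so it has probability \<open>2^{-2n}\<close> under the law of
  \<open>\<xi>_1, \<dots>, \<xi>_n\<close>; hence conditioning on the event gives the uniform law on this set, and
  pushing it forward by the partial sums \<open>S_m = \<ell>(c_m)\<close> gives the claim.
\<close>

lemma contour_nonempty: "contour t \<noteq> []"
  by (cases t) simp

lemma contour_first [simp]: "contour t ! 0 = []"
  by (cases t) simp

text \<open>Position inside the contour of \<open>Node ts\<close> (after the initial root visit) at
  which the excursion into the \<open>k\<close>-th subtree starts: each subtree \<open>s\<close> contributes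
  its own contour followed by one return to the root.\<close>

definition offset :: "ptree list \<Rightarrow> nat \<Rightarrow> nat" where
  "offset ts k = (\<Sum>j<k. Suc (length (contour (ts ! j))))"

lemma offset_0 [simp]: "offset ts 0 = 0"
  by (simp add: offset_def)

lemma offset_Suc: "offset ts (Suc k) = offset ts k + Suc (length (contour (ts ! k)))"
  by (simp add: offset_def)

lemma offset_Cons_Suc: "offset (s # ss) (Suc k) = Suc (length (contour s)) + offset ss k"
  unfolding offset_def by (subst sum.lessThan_Suc_shift) simp

lemma offset_mono: "j \<le> j' \<Longrightarrow> offset ts j \<le> offset ts j'"
  unfolding offset_def by (rule sum_mono2) auto

lemma offset_less: "k < k' \<Longrightarrow> offset ts k + Suc (length (contour (ts ! k))) \<le> offset ts k'"
  using offset_mono[of "Suc k" k' ts] by (simp add: offset_Suc)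

lemma length_contour_list: "length (contour_list i ts) = offset ts (length ts)"
  by (induction ts arbitrary: i) (auto simp: offset_Cons_Suc)

lemma nth_contour_list:
  "k < length ts \<Longrightarrow> q \<le> length (contour (ts ! k)) \<Longrightarrow>
   contour_list i ts ! (offset ts k + q) =
     (if q < length (contour (ts ! k)) then (i + k) # contour (ts ! k) ! q else [])"
proof (induction ts arbitrary: i k)
  case Nil
  then show ?case by simp
next
  case (Cons s ss)
  show ?case
  proof (cases k)
    case 0
    then show ?thesis using Cons.prems by (auto simp: nth_append)
  next
    case (Suc k')
    then have "contour_list i (s # ss) ! (offset (s # ss) k + q) = contour_list (Suc i) ss ! (offset ss k' + q)"
      by (simp add: offset_Cons_Suc nth_append)
    then show ?thesis using Cons.IH[of k' "Suc i"] Cons.prems Suc by simp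
  qed
qed

lemma contour_list_position:
  "r < length (contour_list i ts) \<Longrightarrow> \<exists>k < length ts. \<exists>q \<le> length (contour (ts ! k)). r = offset ts k + q"
proof (induction ts arbitrary: i r)
  case Nil
  then show ?case by simp
next
  case (Cons s ss)
  show ?case
  proof (cases "r \<le> length (contour s)")
    case True
    then show ?thesis by (intro exI[of _ 0]) auto
  next
    case False
    define r' where "r' = r - Suc (length (contour s))"
    have r: "r = Suc (length (contour s)) + r'" using False r'_def by simp
    then have "r' < length (contour_list (Suc i) ss)" using Cons.prems by simp
    from Cons.IH[OF this] obtain k q
      where "k < length ss" "q \<le> length (contour (ss ! k))" "r' = offset ss k + q" by blast
    then show ?thesis using r by (intro exI[of _ "Suc k"]) (auto simp: offset_Cons_Suc)
  qed
qed

lemma length_contour_Node: "length (contour (Node ts)) = Suc (offset ts (length ts))"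
  by (simp add: length_contour_list)

lemma nth_contour_Node:
  "k < length ts \<Longrightarrow> q \<le> length (contour (ts ! k)) \<Longrightarrow>
   contour (Node ts) ! Suc (offset ts k + q) =
     (if q < length (contour (ts ! k)) then k # contour (ts ! k) ! q else [])"
  using nth_contour_list[of k ts q 0] by simp

lemma contour_Node_position:
  "0 < s \<Longrightarrow> s < length (contour (Node ts)) \<Longrightarrow>
   \<exists>k < length ts. \<exists>q \<le> length (contour (ts ! k)). s = Suc (offset ts k + q)"
  using contour_list_position[of "s - 1" 0 ts] by (cases s) auto

lemma contour_at_offset:
  assumes "j \<le> length ts"
  shows "contour (Node ts) ! offset ts j = []"
proof (cases j)
  case (Suc j')
  then show ?thesis
    using nth_contour_Node[of j' ts "length (contour (ts ! j'))"] assms by (simp add: offset_Suc)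
qed simp

lemma contour_last: "contour t ! (length (contour t) - 1) = []"
proof (cases t)
  case (Node ts)
  then show ?thesis using contour_at_offset[of "length ts" ts] by (simp add: length_contour_list)
qed

lemma contour_after_offset: "j < length ts \<Longrightarrow> contour (Node ts) ! Suc (offset ts j) = [j]"
  using nth_contour_Node[of j ts 0] contour_nonempty[of "ts ! j"] by simp

lemma contour_before_offset:
  assumes "0 < j" "j \<le> length ts"
  shows "contour (Node ts) ! (offset ts j - 1) = [j - 1]"
proof -
  obtain j' where j: "j = Suc j'" using assms by (cases j) auto
  have "0 < length (contour (ts ! j'))" using contour_nonempty by auto
  moreover have "offset ts j - 1 = Suc (offset ts j' + (length (contour (ts ! j')) - 1))"
    using j calculation by (simp add: offset_Suc)
  ultimately show ?thesis
    using nth_contour_Node[of j' ts "length (contour (ts ! j')) - 1"] assms j contour_last[of "ts ! j'"]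
    by simp
qed

lemma contour_root_visits:
  assumes "s < length (contour (Node ts))" "contour (Node ts) ! s = []"
  shows "\<exists>j \<le> length ts. s = offset ts j"
proof (cases "s = 0")
  case False
  with assms obtain k q where kq: "k < length ts" "q \<le> length (contour (ts ! k))" "s = Suc (offset ts k + q)"
    using contour_Node_position[of s ts] by auto
  then have "q = length (contour (ts ! k))"
    using nth_contour_Node[OF kq(1,2)] assms by (auto split: if_splits)
  then show ?thesis using kq by (intro exI[of _ "Suc k"]) (auto simp: offset_Suc)
qed (intro exI[of _ 0], auto)

lemma contour_Node_visit:
  assumes "s < length (contour (Node ts))" "contour (Node ts) ! s = k # w"
  shows "k < length ts \<and> (\<exists>q < length (contour (ts ! k)). s = Suc (offset ts k + q) \<and> contour (ts ! k) ! q = w)"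
proof -
  have "0 < s" using assms by (cases s) auto
  then obtain k' q where kq: "k' < length ts" "q \<le> length (contour (ts ! k'))" "s = Suc (offset ts k' + q)"
    using contour_Node_position[of s ts] assms(1) by auto
  then show ?thesis using nth_contour_Node[OF kq(1,2)] assms(2) by (auto split: if_splits)
qed

lemma vertices_Node: "vertices (Node ts) = insert [] (\<Union>k<length ts. Cons k ` vertices (ts ! k))"
proof (rule set_eqI)
  fix v
  show "v \<in> vertices (Node ts) \<longleftrightarrow> v \<in> insert [] (\<Union>k<length ts. Cons k ` vertices (ts ! k))"
    by (cases v) (auto simp: vertices_def)
qed

lemma set_contour_list:
  "set (contour_list i ts) = (\<Union>k<length ts. insert [] (Cons (i + k) ` set (contour (ts ! k))))"
proof (induction ts arbitrary: i)
  case (Cons s ss)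
  show ?case
    by (simp add: Cons.IH lessThan_Suc_eq_insert_0 UN_insert image_Union)
qed simp

lemma vertices_eq_set_contour: "vertices t = set (contour t)"
proof (induction t)
  case (Node ts)
  then show ?case
    by (auto simp: vertices_Node set_contour_list)
qed

lemma finite_vertices: "finite (vertices t)"
  by (simp add: vertices_eq_set_contour)

text \<open>The walk traverses every edge twice: \<open>|contour t| = 2 |vertices t| - 1\<close>.\<close>

lemma length_contour_card: "Suc (length (contour t)) = 2 * card (vertices t)"
proof (induction t)
  case (Node ts)
  have "card (vertices (Node ts)) = Suc (card (\<Union>k<length ts. Cons k ` vertices (ts ! k)))"
    unfolding vertices_Node by (subst card_insert_disjoint) (auto simp: finite_vertices)
  also have "card (\<Union>k<length ts. Cons k ` vertices (ts ! k)) = (\<Sum>k<length ts. card (Cons k ` vertices (ts ! k)))"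
    by (rule card_UN_disjoint) (auto simp: finite_vertices)
  also have "\<dots> = (\<Sum>k<length ts. card (vertices (ts ! k)))"
    by (rule sum.cong) (auto simp: card_image)
  finally have "card (vertices (Node ts)) = Suc (\<Sum>k<length ts. card (vertices (ts ! k)))" .
  moreover have "offset ts (length ts) = (\<Sum>k<length ts. 2 * card (vertices (ts ! k)))"
    unfolding offset_def by (rule sum.cong) (auto simp: Node.IH)
  ultimately show ?case by (simp add: length_contour_list sum_distrib_left)
qed

lemma length_contour: "length (contour t) = Suc (2 * edges t)"
proof -
  have "[] \<in> vertices t" by (simp add: vertices_def)
  then have "card (vertices t) \<ge> 1"
    using finite_vertices[of t] card_0_eq[of "vertices t"] by fastforce
  then show ?thesis using length_contour_card[of t] by (simp add: edges_def)
qed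

lemma offset_even: "offset ts k = 2 * (\<Sum>j<k. card (vertices (ts ! j)))"
  unfolding offset_def sum_distrib_left by (rule sum.cong) (auto simp: length_contour_card)

lemma contour_parity:
  "s < length (contour t) \<Longrightarrow> even (length (contour t ! s)) \<longleftrightarrow> even s"
proof (induction t arbitrary: s)
  case (Node ts)
  show ?case
  proof (cases "s = 0")
    case False
    then obtain k q where kq: "k < length ts" "q \<le> length (contour (ts ! k))" "s = Suc (offset ts k + q)"
      using contour_Node_position[of s ts] Node.prems by auto
    show ?thesis
    proof (cases "q < length (contour (ts ! k))")
      case True
      then show ?thesis
        using nth_contour_Node[OF kq(1,2)] kq Node.IH[of "ts ! k" q] by (simp add: offset_even)
    next
      case False
      then have "q = length (contour (ts ! k))" using kq by simp
      then show ?thesis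
        using nth_contour_Node[OF kq(1,2)] kq length_contour[of "ts ! k"] by (simp add: offset_even)
    qed
  qed simp
qed

lemma contour_nonroot_inner:
  assumes "s < length (contour t)" "contour t ! s \<noteq> []"
  shows "0 < s \<and> Suc s < length (contour t)"
proof -
  have "s \<noteq> 0" using assms(2) by (metis contour_first)
  moreover have "s \<noteq> length (contour t) - 1" using assms contour_last[of t] by auto
  ultimately show ?thesis using assms by auto
qed

lemma contour_between_visits:
  "p \<le> r \<Longrightarrow> r \<le> q \<Longrightarrow> q < length (contour t) \<Longrightarrow> contour t ! p = contour t ! q \<Longrightarrow>
   \<exists>z. contour t ! r = contour t ! p @ z"
proof (induction t arbitrary: p q r)
  case (Node ts)
  show ?case
  proof (cases "contour (Node ts) ! p")
    case (Cons k w)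
    let ?Ck = "contour (ts ! k)"
    obtain a where a: "k < length ts" "a < length ?Ck" "p = Suc (offset ts k + a)" "?Ck ! a = w"
      using contour_Node_visit[of p ts k w] Cons Node.prems by auto
    obtain b where b: "b < length ?Ck" "q = Suc (offset ts k + b)" "?Ck ! b = w"
      using contour_Node_visit[of q ts k w] Cons Node.prems by auto
    obtain k' c where c: "k' < length ts" "c \<le> length (contour (ts ! k'))" "r = Suc (offset ts k' + c)"
      using contour_Node_position[of r ts] a Node.prems by auto
    have "k' = k"
    proof (rule ccontr)
      assume "k' \<noteq> k"
      then consider "k' < k" | "k < k'" by linarith
      then show False
      proof cases
        case 1
        then show ?thesis using offset_less[OF 1, of ts] a c Node.prems by linarith
      next
        case 2
        then show ?thesis using offset_less[OF 2, of ts] b c Node.prems by linarith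
      qed
    qed
    then have ac: "a \<le> c" "c \<le> b" using a b c Node.prems by auto
    then obtain z where "?Ck ! c = w @ z"
      using Node.IH[of "ts ! k" a c b] a b by auto
    then show ?thesis
      using nth_contour_Node[of k ts c] a b c ac Cons \<open>k' = k\<close> by auto
  qed simp
qed

lemma contour_noncrossing:
  assumes "p < r" "r < q" "q < s" "s < length (contour t)"
    and "contour t ! p = contour t ! q" "contour t ! r = contour t ! s"
  shows "contour t ! p = contour t ! r"
proof -
  obtain z1 where z1: "contour t ! r = contour t ! p @ z1"
    using contour_between_visits[of p r q t] assms by auto
  obtain z2 where "contour t ! q = contour t ! r @ z2"
    using contour_between_visits[of r q s t] assms by auto
  with z1 assms have "z1 = []" by simp
  then show ?thesis using z1 by simp
qed

lemma bdeg_Cons: "k < length ts \<Longrightarrow> bdeg (Node ts) (k # w) = bdeg (ts ! k) w"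
  by (simp add: bdeg_def nchildren_def)

lemma nbr_Cons: "k < length ts \<Longrightarrow> w \<noteq> [] \<Longrightarrow> nbr (Node ts) (k # w) j = k # nbr (ts ! k) w j"
  by (simp add: nbr_def bdeg_Cons)

lemma bdeg_root_child: "k < length ts \<Longrightarrow> ts ! k = Node us \<Longrightarrow> bdeg (Node ts) [k] = Suc (length us)"
  by (simp add: bdeg_def nchildren_def)

lemma nbr_root_child:
  "k < length ts \<Longrightarrow> ts ! k = Node us \<Longrightarrow>
   nbr (Node ts) [k] j = (if j = 0 \<or> j = Suc (length us) then [] else [k, j - 1])"
  by (simp add: nbr_def bdeg_root_child)

definition corner_visit :: "ptree \<Rightarrow> nat list \<Rightarrow> nat \<Rightarrow> nat \<Rightarrow> bool" where
  "corner_visit t v j s \<longleftrightarrow> s < length (contour t) \<and> contour t ! s = v \<and>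
     contour t ! (s - 1) = nbr t v j \<and> contour t ! Suc s = nbr t v (Suc j)"

lemma root_child_visit_position:
  assumes "ts ! k = Node us" "s < length (contour (Node ts))" "contour (Node ts) ! s = [k]"
  shows "\<exists>j \<le> length us. s = Suc (offset ts k + offset us j)"
proof -
  obtain q where q: "q < length (contour (ts ! k))" "s = Suc (offset ts k + q)" "contour (ts ! k) ! q = []"
    using contour_Node_visit[OF assms(2,3)] by auto
  then show ?thesis using contour_root_visits[of q us] assms(1) by auto
qed

lemma corner_visit_root_child:
  assumes k: "k < length ts" and us: "ts ! k = Node us" and j: "j \<le> length us"
  shows "corner_visit (Node ts) [k] j (Suc (offset ts k + offset us j))"
proof -
  let ?C = "contour (Node ts)" and ?Ck = "contour (ts ! k)" and ?s = "Suc (offset ts k + offset us j)"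
  have lenCk: "length ?Ck = Suc (offset us (length us))"
    using us length_contour_Node by simp
  have inner: "?C ! Suc (offset ts k + q) = k # ?Ck ! q" if "q < length ?Ck" for q
    using nth_contour_Node[of k ts q] k that by simp
  have oj: "offset us j \<le> offset us (length us)" using offset_mono j by blast
  have bound: "?s < length ?C"
    using offset_less[of k "length ts" ts] k lenCk oj unfolding length_contour_Node by linarith
  have at: "?C ! ?s = [k]"
    using inner[of "offset us j"] oj lenCk contour_at_offset[of j us] j us by simp
  have before: "?C ! (?s - 1) = nbr (Node ts) [k] j"
  proof (cases "j = 0")
    case True
    then show ?thesis using contour_at_offset[of k ts] k nbr_root_child[OF k us] by simp
  next
    case False
    then have "offset us j > 0" using offset_less[of 0 j us] by simp
    then have "?s - 1 = Suc (offset ts k + (offset us j - 1))" by simp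
    then show ?thesis
      using inner[of "offset us j - 1"] oj lenCk contour_before_offset[of j us] False j us
        nbr_root_child[OF k us] by simp
  qed
  have after: "?C ! Suc ?s = nbr (Node ts) [k] (Suc j)"
  proof (cases "j < length us")
    case True
    then have "Suc (offset us j) < length ?Ck"
      using offset_less[of j "length us" us] lenCk by simp
    then show ?thesis
      using inner[of "Suc (offset us j)"] contour_after_offset[of j us] True us nbr_root_child[OF k us]
      by simp
  next
    case False
    then have "j = length us" using j by simp
    then show ?thesis
      using nth_contour_Node[of k ts "length ?Ck"] k lenCk nbr_root_child[OF k us] by simp
  qed
  show ?thesis using bound at before after by (simp add: corner_visit_def)
qed

text \<open>Corner visits of a vertex \<open>w \<noteq> []\<close> in a subtree are corner visits of \<open>k # w\<close> in
  the whole tree: both neighbours of \<open>w\<close> are visited within the same excursion.\<close>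

lemma corner_visit_Cons:
  assumes k: "k < length ts" and w: "w \<noteq> []" and cv: "corner_visit (ts ! k) w j q"
  shows "corner_visit (Node ts) (k # w) j (Suc (offset ts k + q))"
proof -
  let ?C = "contour (Node ts)" and ?Ck = "contour (ts ! k)"
  have q: "q < length ?Ck" "?Ck ! q = w" using cv by (auto simp: corner_visit_def)
  then have q_inner: "0 < q" "Suc q < length ?Ck" using contour_nonroot_inner[of q "ts ! k"] w by auto
  have inner: "?C ! Suc (offset ts k + p) = k # ?Ck ! p" if "p < length ?Ck" for p
    using nth_contour_Node[of k ts p] k that by simp
  have "Suc (offset ts k + q) - 1 = Suc (offset ts k + (q - 1))" using q_inner by simp
  moreover have "Suc (Suc (offset ts k + q)) < length ?C"
    using offset_less[of k "length ts" ts] k q_inner unfolding length_contour_Node by linarith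
  ultimately show ?thesis
    using cv inner[of q] inner[of "q - 1"] inner[of "Suc q"] q_inner nbr_Cons[OF k w]
    by (simp add: corner_visit_def)
qed

lemma visit_is_corner_visit:
  "v \<noteq> [] \<Longrightarrow> s < length (contour t) \<Longrightarrow> contour t ! s = v \<Longrightarrow> \<exists>j < bdeg t v. corner_visit t v j s"
proof (induction t arbitrary: v s)
  case (Node ts)
  then obtain k w where v: "v = k # w" by (cases v) auto
  obtain q where k: "k < length ts" and q: "q < length (contour (ts ! k))" "s = Suc (offset ts k + q)"
    "contour (ts ! k) ! q = w"
    using contour_Node_visit Node.prems v by blast
  show ?case
  proof (cases "w = []")
    case True
    obtain us where us: "ts ! k = Node us" by (cases "ts ! k")
    obtain j where "j \<le> length us" "s = Suc (offset ts k + offset us j)"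
      using root_child_visit_position[OF us] Node.prems v True by auto
    then show ?thesis
      using corner_visit_root_child[OF k us] bdeg_root_child[OF k us] v True
      by (intro exI[of _ j]) auto
  next
    case False
    obtain j where "j < bdeg (ts ! k) w" "corner_visit (ts ! k) w j q"
      using Node.IH[of "ts ! k" w q] k q False by auto
    then show ?thesis using corner_visit_Cons[OF k False] bdeg_Cons[OF k] q v by auto
  qed
qed

lemma corner_is_visited:
  "v \<in> vertices t \<Longrightarrow> v \<noteq> [] \<Longrightarrow> j < bdeg t v \<Longrightarrow> \<exists>s. corner_visit t v j s"
proof (induction t arbitrary: v)
  case (Node ts)
  then obtain k w where v: "v = k # w" "k < length ts" "w \<in> vertices (ts ! k)"
    by (auto simp: vertices_Node)
  show ?case
  proof (cases "w = []")
    case True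
    obtain us where us: "ts ! k = Node us" by (cases "ts ! k")
    then show ?thesis
      using corner_visit_root_child[OF v(2) us, of j] bdeg_root_child[OF v(2) us] Node.prems v True
      by auto
  next
    case False
    then show ?thesis
      using Node.IH[of "ts ! k" w] corner_visit_Cons[OF v(2) False] bdeg_Cons[OF v(2)] Node.prems v
      by (metis nth_mem)
  qed
qed

lemma wc_0 [simp]: "wc t 0 = []"
  by (simp add: wc_def)

lemma wc_white: "m \<le> edges t \<Longrightarrow> wc t m \<in> white t"
  using contour_parity[of "2 * m" t] length_contour[of t]
  by (auto simp: wc_def white_def vertices_eq_set_contour)

lemma white_eq_wc: "w \<in> white t \<Longrightarrow> \<exists>m \<le> edges t. wc t m = w"
proof -
  assume w: "w \<in> white t"
  then obtain s where s: "s < length (contour t)" "contour t ! s = w"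
    by (auto simp: white_def vertices_eq_set_contour in_set_conv_nth)
  then have "even s" using contour_parity[of s t] w by (auto simp: white_def)
  then obtain m where "s = 2 * m" by (auto elim: evenE)
  then show ?thesis using s length_contour[of t] by (intro exI[of _ m]) (auto simp: wc_def)
qed

lemma odd_step_black:
  assumes "i \<in> {1..edges t}"
  shows "contour t ! (2 * i - 1) \<in> black t"
proof -
  have s: "2 * i - 1 < length (contour t)" using assms length_contour[of t] by auto
  moreover have "odd (2 * i - 1)" using assms by auto
  ultimately show ?thesis
    using contour_parity[OF s] by (auto simp: black_def vertices_eq_set_contour)
qed

lemma Bset_subset: "Bset t v \<subseteq> {1..edges t}"
  by (auto simp: Bset_def)

lemma finite_Bset: "finite (Bset t v)"
  using Bset_subset finite_subset by blast

lemma black_nonroot: "v \<in> black t \<Longrightarrow> v \<noteq> []"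
  by (auto simp: black_def)

lemma nbr_inj_on: "v \<noteq> [] \<Longrightarrow> j < bdeg t v \<Longrightarrow> j' < bdeg t v \<Longrightarrow> nbr t v j = nbr t v j' \<Longrightarrow> j = j'"
  by (cases "j = 0"; cases "j' = 0") (auto simp: nbr_def dest: arg_cong[of _ _ length])

lemma Bset_step_corner:
  assumes v: "v \<in> black t" and i: "i \<in> Bset t v"
  shows "\<exists>j < bdeg t v. wc t (i - 1) = nbr t v j \<and> wc t i = nbr t v (Suc j)"
proof -
  have i1: "1 \<le> i" "i \<le> edges t" "contour t ! (2 * i - 1) = v" using i by (auto simp: Bset_def)
  have s: "2 * i - 1 < length (contour t)" using i1 length_contour[of t] by simp
  obtain j where j: "j < bdeg t v" "corner_visit t v j (2 * i - 1)"
    using visit_is_corner_visit[OF black_nonroot[OF v] s i1(3)] by blast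
  have "2 * i - 1 - 1 = 2 * (i - 1)" "Suc (2 * i - 1) = 2 * i" using i1 by auto
  then show ?thesis using j by (auto simp: wc_def corner_visit_def)
qed

lemma corner_Bset_step:
  assumes v: "v \<in> black t" and j: "j < bdeg t v"
  shows "\<exists>i \<in> Bset t v. wc t (i - 1) = nbr t v j \<and> wc t i = nbr t v (Suc j)"
proof -
  have "v \<in> vertices t" using v by (simp add: black_def)
  then obtain s where s: "corner_visit t v j s"
    using corner_is_visited[OF _ black_nonroot[OF v] j] by blast
  then have "odd s" using contour_parity[of s t] v by (auto simp: black_def corner_visit_def)
  then obtain i' where i': "s = Suc (2 * i')" by (auto elim: oddE)
  have "Suc i' \<in> Bset t v" using s i' length_contour[of t] by (auto simp: Bset_def corner_visit_def)
  then show ?thesis using s i' by (intro bexI[of _ "Suc i'"]) (auto simp: wc_def corner_visit_def)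
qed

text \<open>... and different steps in \<open>B_v\<close> leave from different white vertices: otherwise
  the two visits of \<open>v\<close> and of the white vertex would interleave.\<close>

lemma Bset_step_unique:
  assumes v: "v \<in> black t" and i: "i \<in> Bset t v" "i' \<in> Bset t v" and w: "wc t (i - 1) = wc t (i' - 1)"
  shows "i = i'"
proof -
  have False if "i < i'" "i \<in> Bset t v" "i' \<in> Bset t v" "wc t (i - 1) = wc t (i' - 1)" for i i'
  proof -
    have a: "1 \<le> i" "i' \<le> edges t" "contour t ! (2 * i - 1) = v" "contour t ! (2 * i' - 1) = v"
      using that by (auto simp: Bset_def)
    have "2 * (i - 1) = 2 * i - 2" "2 * (i' - 1) = 2 * i' - 2" by auto
    then have c: "contour t ! (2 * i - 2) = contour t ! (2 * i' - 2)" using that(4) by (simp add: wc_def)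
    have o: "2 * i - 2 < 2 * i - 1" "2 * i - 1 < 2 * i' - 2" "2 * i' - 2 < 2 * i' - 1"
      "2 * i' - 1 < length (contour t)"
      using a that(1) length_contour[of t] by auto
    have "contour t ! (2 * i - 2) = contour t ! (2 * i - 1)"
      using contour_noncrossing[OF o c] a by simp
    then have "even (2 * i - 2) \<longleftrightarrow> even (2 * i - 1)"
      using contour_parity[of "2 * i - 2" t] contour_parity[of "2 * i - 1" t] o by auto
    then show False using a by presburger
  qed
  then show ?thesis using i w by (metis linorder_neqE_nat)
qed

lemma Bset_corner_bij:
  assumes v: "v \<in> black t"
  obtains \<psi> where "bij_betw \<psi> {..<bdeg t v} (Bset t v)"
    and "\<And>j. j < bdeg t v \<Longrightarrow> wc t (\<psi> j - 1) = nbr t v j \<and> wc t (\<psi> j) = nbr t v (Suc j)"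
proof -
  define \<psi> where "\<psi> j = (SOME i. i \<in> Bset t v \<and> wc t (i - 1) = nbr t v j \<and> wc t i = nbr t v (Suc j))" for j
  have \<psi>: "\<psi> j \<in> Bset t v \<and> wc t (\<psi> j - 1) = nbr t v j \<and> wc t (\<psi> j) = nbr t v (Suc j)"
    if "j < bdeg t v" for j
    unfolding \<psi>_def by (rule someI_ex) (use corner_Bset_step[OF v that] in blast)
  have "inj_on \<psi> {..<bdeg t v}"
    by (rule inj_onI) (metis \<psi> lessThan_iff nbr_inj_on black_nonroot[OF v])
  moreover have "Bset t v \<subseteq> \<psi> ` {..<bdeg t v}"
  proof
    fix i assume i: "i \<in> Bset t v"
    then obtain j where j: "j < bdeg t v" "wc t (i - 1) = nbr t v j"
      using Bset_step_corner[OF v] by blast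
    then have "\<psi> j = i" using Bset_step_unique[OF v, of "\<psi> j" i] \<psi>[OF j(1)] i by auto
    then show "i \<in> \<psi> ` {..<bdeg t v}" using j by auto
  qed
  ultimately have "bij_betw \<psi> {..<bdeg t v} (Bset t v)"
    using \<psi> by (auto simp: bij_betw_def)
  then show ?thesis using that \<psi> by blast
qed

text \<open>Around a black vertex the label differences of all its corners telescope.\<close>

lemma sum_Bset_label_differences:
  assumes v: "v \<in> black t"
  shows "(\<Sum>i\<in>Bset t v. l (wc t i) - l (wc t (i - 1))) = (0::int)"
proof -
  obtain \<psi> where bij: "bij_betw \<psi> {..<bdeg t v} (Bset t v)"
    and \<psi>: "\<And>j. j < bdeg t v \<Longrightarrow> wc t (\<psi> j - 1) = nbr t v j \<and> wc t (\<psi> j) = nbr t v (Suc j)"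
    using Bset_corner_bij[OF v] by blast
  have "(\<Sum>i\<in>Bset t v. l (wc t i) - l (wc t (i - 1))) = (\<Sum>j<bdeg t v. l (wc t (\<psi> j)) - l (wc t (\<psi> j - 1)))"
    by (rule sum.reindex_bij_betw[OF bij, symmetric])
  also have "\<dots> = (\<Sum>j<bdeg t v. l (nbr t v (Suc j)) - l (nbr t v j))"
    by (rule sum.cong) (use \<psi> in auto)
  also have "\<dots> = 0"
    using sum_lessThan_telescope[where f = "\<lambda>j. l (nbr t v j)" and m = "bdeg t v"]
    by (simp add: nbr_def)
  finally show ?thesis .
qed

definition partial_sum :: "(nat \<Rightarrow> int) \<Rightarrow> nat \<Rightarrow> int" where
  "partial_sum x m = (\<Sum>i\<in>{1..m}. x i)"

lemma partial_sum_0 [simp]: "partial_sum x 0 = 0"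
  by (simp add: partial_sum_def)

lemma partial_sum_Suc: "partial_sum x (Suc m) = partial_sum x m + x (Suc m)"
  by (simp add: partial_sum_def)

lemma partial_sum_split: "m \<le> m' \<Longrightarrow> partial_sum x m' = partial_sum x m + (\<Sum>i\<in>{Suc m..m'}. x i)"
proof -
  assume "m \<le> m'"
  then have "{1..m'} = {1..m} \<union> {Suc m..m'}" by auto
  then show ?thesis unfolding partial_sum_def by (simp add: sum.union_disjoint[symmetric])
qed

lemma sum_union_of_Bsets_zero:
  assumes S: "S \<subseteq> {1..edges t}" and closed: "\<forall>i\<in>S. Bset t (contour t ! (2 * i - 1)) \<subseteq> S"
    and x: "x \<in> cond_event t"
  shows "(\<Sum>i\<in>S. x i) = 0"
proof -
  define g where "g i = contour t ! (2 * i - 1)" for i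
  have fS: "finite S" using S finite_subset by blast
  have "(\<Sum>i\<in>S. x i) = (\<Sum>v\<in>g ` S. \<Sum>i\<in>{i. i \<in> S \<and> g i = v}. x i)"
    by (rule sum.group[symmetric]) (use fS in auto)
  also have "\<dots> = (\<Sum>v\<in>g ` S. 0)"
  proof (rule sum.cong)
    fix v assume "v \<in> g ` S"
    then obtain i0 where i0: "i0 \<in> S" "v = g i0" by auto
    have "v \<in> black t" using odd_step_black[of i0 t] i0 S g_def by auto
    moreover have "{i. i \<in> S \<and> g i = v} = Bset t v"
      using S closed i0 by (auto simp: Bset_def g_def)
    ultimately show "(\<Sum>i\<in>{i. i \<in> S \<and> g i = v}. x i) = 0" using x by (simp add: cond_event_def)
  qed simp
  finally show ?thesis by simp
qed

lemma sum_increments_zero: "x \<in> cond_event t \<Longrightarrow> (\<Sum>i\<in>{1..edges t}. x i) = 0"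
  by (rule sum_union_of_Bsets_zero) (use Bset_subset in auto)

text \<open>Between two visits of the same white vertex, the walk only visits black vertices
  all of whose steps lie in between (non-crossing), so the increments there sum to zero.\<close>

lemma sum_between_visits_zero:
  assumes m: "m < m'" "m' \<le> edges t" and w: "wc t m = wc t m'" and x: "x \<in> cond_event t"
  shows "(\<Sum>i\<in>{Suc m..m'}. x i) = 0"
proof (rule sum_union_of_Bsets_zero[OF _ _ x])
  show "{Suc m..m'} \<subseteq> {1..edges t}" using m by auto
  show "\<forall>i\<in>{Suc m..m'}. Bset t (contour t ! (2 * i - 1)) \<subseteq> {Suc m..m'}"
  proof (intro ballI subsetI)
    fix i i' assume i: "i \<in> {Suc m..m'}" and i': "i' \<in> Bset t (contour t ! (2 * i - 1))"
    then have i'1: "1 \<le> i'" "i' \<le> edges t" "contour t ! (2 * i' - 1) = contour t ! (2 * i - 1)"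
      by (auto simp: Bset_def)
    have L: "length (contour t) = Suc (2 * edges t)" by (rule length_contour)
    have ww: "contour t ! (2 * m) = contour t ! (2 * m')" using w by (simp add: wc_def)
    show "i' \<in> {Suc m..m'}"
    proof (rule ccontr)
      assume "i' \<notin> {Suc m..m'}"
      then consider "i' \<le> m" | "m' < i'" by auto
      then show False
      proof cases
        case 1
        have o: "2 * i' - 1 < 2 * m" "2 * m < 2 * i - 1" "2 * i - 1 < 2 * m'" "2 * m' < length (contour t)"
          using 1 i i'1 m L by auto
        have "contour t ! (2 * i' - 1) = contour t ! (2 * m)"
          using contour_noncrossing[OF o i'1(3) ww] i'1 by simp
        then have "even (2 * i' - 1) \<longleftrightarrow> even (2 * m)"
          using contour_parity[of "2 * i' - 1" t] contour_parity[of "2 * m" t] o by auto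
        then show False using i'1 by presburger
      next
        case 2
        have o: "2 * m < 2 * i - 1" "2 * i - 1 < 2 * m'" "2 * m' < 2 * i' - 1" "2 * i' - 1 < length (contour t)"
          using 2 i i'1 m L by auto
        have "contour t ! (2 * m) = contour t ! (2 * i - 1)"
          using contour_noncrossing[OF o ww i'1(3)[symmetric]] by simp
        then have "even (2 * m) \<longleftrightarrow> even (2 * i - 1)"
          using contour_parity[of "2 * m" t] contour_parity[of "2 * i - 1" t] o by auto
        then show False using i by presburger
      qed
    qed
  qed
qed

lemma partial_sum_same_vertex:
  assumes "m \<le> edges t" "m' \<le> edges t" "wc t m = wc t m'" "x \<in> cond_event t"
  shows "partial_sum x m = partial_sum x m'"
proof -
  have *: "partial_sum x a = partial_sum x b" if "a < b" "b \<le> edges t" "wc t a = wc t b" for a b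
    using partial_sum_split[of a b x] sum_between_visits_zero[OF that assms(4)] that by simp
  show ?thesis
  proof (cases m m' rule: linorder_cases)
    case less
    show ?thesis using *[OF less assms(2,3)] .
  next
    case greater
    show ?thesis using *[OF greater assms(1) assms(3)[symmetric]] by simp
  qed simp
qed

text \<open>Increment sequences which are admissible for the conditioned walk: supported on
  \<open>{1..n}\<close>, with all increments \<open>\<ge> -1\<close> (the support of \<open>\<xi>\<close>), and in the conditioning event.\<close>

definition increment_set :: "ptree \<Rightarrow> (nat \<Rightarrow> int) set" where
  "increment_set t = {x. (\<forall>i. i \<notin> {1..edges t} \<longrightarrow> x i = 0) \<and> (\<forall>i\<in>{1..edges t}. -1 \<le> x i) \<and>
     x \<in> cond_event t}"

definition label_increments :: "ptree \<Rightarrow> (nat list \<Rightarrow> int) \<Rightarrow> nat \<Rightarrow> int" where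
  "label_increments t l i = (if i \<in> {1..edges t} then l (wc t i) - l (wc t (i - 1)) else 0)"

definition increments_labeling :: "ptree \<Rightarrow> (nat \<Rightarrow> int) \<Rightarrow> nat list \<Rightarrow> int" where
  "increments_labeling t x p =
     (if p \<in> white t then partial_sum x (SOME m. m \<le> edges t \<and> wc t m = p) else 0)"

lemma increments_labeling_wc:
  assumes x: "x \<in> cond_event t" and m: "m \<le> edges t"
  shows "increments_labeling t x (wc t m) = partial_sum x m"
proof -
  let ?m = "SOME m'. m' \<le> edges t \<and> wc t m' = wc t m"
  have "?m \<le> edges t \<and> wc t ?m = wc t m" by (rule someI_ex) (use m in blast)
  then show ?thesis
    using partial_sum_same_vertex[of ?m t m x] wc_white[OF m] x m by (simp add: increments_labeling_def)
qed

lemma partial_sum_label_increments: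
  "l \<in> admissible t \<Longrightarrow> m \<le> edges t \<Longrightarrow> partial_sum (label_increments t l) m = l (wc t m)"
  by (induction m) (auto simp: partial_sum_Suc label_increments_def admissible_def)

text \<open>The increments of an admissible labeling form an element of the increment set:
  admissibility at a corner gives \<open>\<ge> -1\<close>, telescoping around a black vertex gives
  \<open>S_{B_v} = 0\<close>.\<close>

lemma label_increments_in:
  assumes l: "l \<in> admissible t"
  shows "label_increments t l \<in> increment_set t"
proof -
  have "-1 \<le> label_increments t l i" if i: "i \<in> {1..edges t}" for i
  proof -
    let ?v = "contour t ! (2 * i - 1)"
    have v: "?v \<in> black t" using odd_step_black[OF i] .
    moreover have "i \<in> Bset t ?v" using i by (simp add: Bset_def)
    ultimately obtain j where j: "j < bdeg t ?v" "wc t (i - 1) = nbr t ?v j" "wc t i = nbr t ?v (Suc j)"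
      using Bset_step_corner by blast
    have "l (nbr t ?v j) - 1 \<le> l (nbr t ?v (Suc j))" using l v j(1) unfolding admissible_def by blast
    then show ?thesis using j i by (simp add: label_increments_def)
  qed
  moreover have "label_increments t l \<in> cond_event t"
    unfolding cond_event_def
  proof (intro CollectI ballI)
    fix v assume v: "v \<in> black t"
    have "(\<Sum>i\<in>Bset t v. label_increments t l i) = (\<Sum>i\<in>Bset t v. l (wc t i) - l (wc t (i - 1)))"
      by (rule sum.cong) (use Bset_subset[of t v] in \<open>auto simp: label_increments_def\<close>)
    then show "(\<Sum>i\<in>Bset t v. label_increments t l i) = 0" using sum_Bset_label_differences[OF v] by simp
  qed
  ultimately show ?thesis by (auto simp: increment_set_def label_increments_def)
qed

lemma increments_labeling_admissible:
  assumes x: "x \<in> increment_set t"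
  shows "increments_labeling t x \<in> admissible t"
proof -
  have xc: "x \<in> cond_event t" using x by (simp add: increment_set_def)
  have "increments_labeling t x (nbr t u (Suc j)) \<ge> increments_labeling t x (nbr t u j) - 1"
    if u: "u \<in> black t" "j < bdeg t u" for u j
  proof -
    obtain i where i: "i \<in> Bset t u" "wc t (i - 1) = nbr t u j" "wc t i = nbr t u (Suc j)"
      using corner_Bset_step[OF u] by blast
    have i1: "1 \<le> i" "i \<le> edges t" using i(1) Bset_subset[of t u] by auto
    have "increments_labeling t x (nbr t u (Suc j)) = partial_sum x i"
      using increments_labeling_wc[OF xc i1(2)] i by simp
    moreover have "increments_labeling t x (nbr t u j) = partial_sum x (i - 1)"
      using increments_labeling_wc[OF xc, of "i - 1"] i i1 by simp
    moreover have "partial_sum x i = partial_sum x (i - 1) + x i" using partial_sum_Suc[of x "i - 1"] i1 by simp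
    moreover have "x i \<ge> -1" using x i1 by (simp add: increment_set_def)
    ultimately show ?thesis by simp
  qed
  moreover have "increments_labeling t x [] = 0" using increments_labeling_wc[OF xc, of 0] by simp
  ultimately show ?thesis by (auto simp: admissible_def increments_labeling_def)
qed

lemma label_increments_of_increments_labeling:
  assumes x: "x \<in> increment_set t"
  shows "label_increments t (increments_labeling t x) = x"
proof
  fix i
  have xc: "x \<in> cond_event t" using x by (simp add: increment_set_def)
  show "label_increments t (increments_labeling t x) i = x i"
  proof (cases "i \<in> {1..edges t}")
    case True
    then have "i \<le> edges t" "i - 1 \<le> edges t" "1 \<le> i" by auto
    then show ?thesis
      using increments_labeling_wc[OF xc, of i] increments_labeling_wc[OF xc, of "i - 1"]
        partial_sum_Suc[of x "i - 1"] by (simp add: label_increments_def)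
  next
    case False
    moreover have "x i = 0" using x False unfolding increment_set_def by blast
    ultimately show ?thesis unfolding label_increments_def by (simp only: if_False)
  qed
qed

lemma label_increments_bij:
  "bij_betw (label_increments t) (admissible t) (increment_set t)"
proof (rule bij_betw_byWitness[where f' = "increments_labeling t"])
  show "\<forall>l\<in>admissible t. increments_labeling t (label_increments t l) = l"
  proof (intro ballI ext)
    fix l p assume l: "l \<in> admissible t"
    have li: "label_increments t l \<in> cond_event t"
      using label_increments_in[OF l] by (simp add: increment_set_def)
    show "increments_labeling t (label_increments t l) p = l p"
    proof (cases "p \<in> white t")
      case True
      then obtain m where "m \<le> edges t" "wc t m = p" using white_eq_wc by blast
      then show ?thesis
        using increments_labeling_wc[OF li] partial_sum_label_increments[OF l] by metis
    next
      case False
      then show ?thesis using l by (simp add: admissible_def increments_labeling_def)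
    qed
  qed
qed (use label_increments_of_increments_labeling label_increments_in increments_labeling_admissible in auto)

text \<open>Each increment is at most \<open>n\<close>: it is cancelled within its \<open>B_v\<close> by at most \<open>n - 1\<close>
  increments, each \<open>\<ge> -1\<close>.\<close>

lemma increment_set_bound:
  assumes x: "x \<in> increment_set t" and i: "i \<in> {1..edges t}"
  shows "x i \<le> int (edges t)"
proof -
  let ?B = "Bset t (contour t ! (2 * i - 1))"
  have iB: "i \<in> ?B" using i by (simp add: Bset_def)
  have "(\<Sum>j\<in>?B. x j) = 0"
    using x odd_step_black[OF i] by (simp add: increment_set_def cond_event_def)
  then have sum: "x i + (\<Sum>j\<in>?B - {i}. x j) = 0"
    using sum.remove[OF finite_Bset iB, of x] by simp
  have "(\<Sum>j\<in>?B - {i}. (-1::int)) \<le> (\<Sum>j\<in>?B - {i}. x j)"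
    using x Bset_subset[of t] by (intro sum_mono) (auto simp: increment_set_def)
  moreover have "card (?B - {i}) \<le> edges t"
    using card_mono[of "{1..edges t}" "?B - {i}"] Bset_subset[of t] by auto
  ultimately show ?thesis using sum by simp
qed

lemma finite_increment_set: "finite (increment_set t)"
proof (rule finite_subset)
  let ?F = "{f. \<forall>i. (i \<in> {1..edges t} \<longrightarrow> f i \<in> {-1..int (edges t)}) \<and> (i \<notin> {1..edges t} \<longrightarrow> f i = 0)}"
  show "increment_set t \<subseteq> ?F"
  proof
    fix x assume x: "x \<in> increment_set t"
    then show "x \<in> ?F" using increment_set_bound[OF x] by (simp add: increment_set_def)
  qed
  show "finite ?F"
    by (rule finite_set_of_finite_funs) simp_all
qed

lemma finite_admissible: "finite (admissible t)"
  using bij_betw_finite[OF label_increments_bij] finite_increment_set by blast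

lemma admissible_nonempty: "admissible t \<noteq> {}"
proof -
  have "(\<lambda>_. 0) \<in> admissible t" by (simp add: admissible_def)
  then show ?thesis by blast
qed

text \<open>\<open>\<xi> + 1\<close> is geometric with parameter 1/2; in particular \<open>xi_pmf\<close> has the intended
  probabilities \<open>2^{-i-2}\<close>.\<close>

lemma pmf_xi: "pmf xi_pmf i = (if i \<ge> -1 then (1/2) powr (real_of_int (i + 2)) else 0)"
proof -
  define f where "f = (\<lambda>i::int. if i \<ge> -1 then (1/2::real) powr (real_of_int (i + 2)) else 0)"
  define G where "G = map_pmf (\<lambda>n::nat. int n - 1) (geometric_pmf (1/2))"
  have inj: "inj (\<lambda>n::nat. int n - 1)" by (auto intro: injI)
  have fG: "f i = pmf G i" for i
  proof (cases "i \<ge> -1")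
    case True
    then have ii: "i = int (nat (i + 1)) - 1" by simp
    have "pmf G i = pmf (geometric_pmf (1/2)) (nat (i + 1))"
      unfolding G_def by (subst ii) (rule pmf_map_inj'[OF inj])
    also have "\<dots> = (1/2) ^ Suc (nat (i + 1))" by simp
    also have "\<dots> = (1/2) powr real (Suc (nat (i + 1)))" by (rule powr_realpow[symmetric]) simp
    also have "real (Suc (nat (i + 1))) = real_of_int (i + 2)" using True by simp
    finally show ?thesis using True by (simp add: f_def)
  next
    case False
    then have "i \<notin> set_pmf G" by (auto simp: G_def)
    then show ?thesis using False by (simp add: f_def set_pmf_iff)
  qed
  have "(\<integral>\<^sup>+x. ennreal (f x) \<partial>count_space UNIV) = (\<integral>\<^sup>+x. ennreal (pmf G x) \<partial>count_space UNIV)"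
    by (simp add: fG)
  also have "\<dots> = 1" by (simp add: nn_integral_pmf measure_pmf.emeasure_space_1)
  finally have "pmf (embed_pmf f) i = f i" by (intro pmf_embed_pmf) (simp_all add: f_def)
  then show ?thesis by (simp add: xi_pmf_def f_def)
qed

lemma pmf_increments:
  assumes supp: "\<forall>i. i \<notin> {1..n} \<longrightarrow> x i = 0" and ge: "\<forall>i\<in>{1..n}. -1 \<le> x i"
  shows "pmf (increments n) x = (1/2) powr (real_of_int (\<Sum>i\<in>{1..n}. x i) + 2 * real n)"
proof -
  have "pmf (increments n) x = (\<Prod>i\<in>{1..n}. pmf xi_pmf (x i))"
    using supp by (simp add: increments_def pmf_Pi)
  also have "\<dots> = (\<Prod>i\<in>{1..n}. (1/2) powr (real_of_int (x i + 2)))"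
    by (rule prod.cong) (use ge in \<open>auto simp: pmf_xi\<close>)
  also have "\<dots> = (1/2) powr (\<Sum>i\<in>{1..n}. real_of_int (x i + 2))"
    by (simp add: powr_sum)
  also have "(\<Sum>i\<in>{1..n}. real_of_int (x i + 2)) = real_of_int (\<Sum>i\<in>{1..n}. x i) + 2 * real n"
    by (simp add: sum.distrib)
  finally show ?thesis .
qed

lemma pmf_increments_eq_0:
  assumes "\<not> ((\<forall>i. i \<notin> {1..n} \<longrightarrow> x i = 0) \<and> (\<forall>i\<in>{1..n}. -1 \<le> x i))"
  shows "pmf (increments n) x = 0"
proof (cases "\<forall>i. i \<notin> {1..n} \<longrightarrow> x i = 0")
  case True
  then obtain i where i: "i \<in> {1..n}" "x i < -1" using assms by (auto simp: not_le)
  have "(\<Prod>i\<in>{1..n}. pmf xi_pmf (x i)) = 0"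
    by (rule prod_zero) (use i in \<open>auto simp: pmf_xi intro!: bexI[of _ i]\<close>)
  then show ?thesis using True by (simp add: increments_def pmf_Pi)
qed (auto simp: increments_def pmf_Pi)

lemma cond_pmf_eq_pmf_of_set:
  assumes A: "finite A" "A \<noteq> {}" "A \<subseteq> E"
    and const: "\<And>x. x \<in> A \<Longrightarrow> pmf p x = c" and c: "c \<noteq> 0"
    and zero: "\<And>x. x \<in> E \<Longrightarrow> x \<notin> A \<Longrightarrow> pmf p x = 0"
  shows "cond_pmf p E = pmf_of_set A"
proof -
  obtain a where a: "a \<in> A" using A(2) by blast
  moreover have "a \<in> set_pmf p" using const[OF a] c by (simp add: set_pmf_iff)
  ultimately have ne: "set_pmf p \<inter> E \<noteq> {}" using A(3) by blast
  define d where "d = c / measure p E"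
  have pmf_cond': "pmf (cond_pmf p E) x = (if x \<in> A then d else 0)" for x
    using pmf_cond[OF ne, of x] const zero A(3) by (auto simp: d_def)
  have "set_pmf (cond_pmf p E) \<subseteq> A" by (auto simp: set_pmf_iff pmf_cond' split: if_splits)
  then have "(\<Sum>x\<in>A. pmf (cond_pmf p E) x) = 1" by (rule sum_pmf_eq_1[OF A(1)])
  then have "d = 1 / real (card A)" using A(1,2) by (simp add: pmf_cond' field_simps)
  then show ?thesis using A(1,2) by (intro pmf_eqI) (simp add: pmf_cond' indicator_def)
qed

text \<open>The conditioned increments are uniform on the increment set (all its elements sum to
  zero, so have probability \<open>2^{-2n}\<close>).\<close>

lemma cond_pmf_increments: "cond_pmf (increments (edges t)) (cond_event t) = pmf_of_set (increment_set t)"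
proof (rule cond_pmf_eq_pmf_of_set[OF finite_increment_set])
  show "increment_set t \<noteq> {}" "increment_set t \<subseteq> cond_event t"
    using label_increments_in[of "\<lambda>_. 0" t] by (auto simp: admissible_def increment_set_def)
  show "pmf (increments (edges t)) x = (1/2) powr (2 * real (edges t))" if "x \<in> increment_set t" for x
    using that pmf_increments[of "edges t" x] sum_increments_zero[of x t]
    by (simp add: increment_set_def del: of_int_sum)
  show "pmf (increments (edges t)) x = 0" if "x \<in> cond_event t" "x \<notin> increment_set t" for x
    using that pmf_increments_eq_0[of "edges t" x] by (simp add: increment_set_def)
qed simp

lemma walk_path_label_increments:
  "l \<in> admissible t \<Longrightarrow> walk_path (edges t) (label_increments t l) = map (\<lambda>m. l (wc t m)) [0..<edges t + 1]"
  using partial_sum_label_increments[of l t] by (simp add: walk_path_def partial_sum_def)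

theorem mainTheorem3:
  fixes \<tau> :: ptree
  shows "cond_walk \<tau> = label_seq \<tau>"
proof -
  let ?n = "edges \<tau>" and ?A = "admissible \<tau>"
  have "cond_walk \<tau> = map_pmf (walk_path ?n) (pmf_of_set (increment_set \<tau>))"
    by (simp add: cond_walk_def cond_pmf_increments)
  also have "pmf_of_set (increment_set \<tau>) = map_pmf (label_increments \<tau>) (pmf_of_set ?A)"
    by (rule map_pmf_of_set_bij_betw[OF label_increments_bij admissible_nonempty finite_admissible, symmetric])
  also have "map_pmf (walk_path ?n) \<dots> = map_pmf (\<lambda>l. map (\<lambda>m. l (wc \<tau> m)) [0..<?n + 1]) (pmf_of_set ?A)"
    unfolding pmf.map_comp o_def
    by (rule map_pmf_cong) (simp_all add: walk_path_label_increments finite_admissible admissible_nonempty)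
  finally show ?thesis by (simp add: label_seq_def)
qed

end
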